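(* Let $A$ be the $2$-pole obtained from the Petersen graph by cutting one edge into a pair of dangling edges. Then: (a) every perfect matching of $A$ contains either both dangling edges or neither of them; (b) if $M_1, M_2, M_3$ are perfect matchings of $A$ none of which contains a dangling edge, then at least $2$ links of $A$ are not covered by $M_1\cup M_2\cup M_3$, and for a suitable such triple exactly $2$ links are uncovered; (c) if $M_1, M_2, M_3$ are perfect matchings of $A$ one of which contains a dangling edge, then at least $3$ links of $A$ are not covered by $M_1\cup M_2\cup M_3$, and for a suitable such triple exactly $3$ links are uncovered.
   Context: A multipole is a cubic "graph with dangling edges": each edge is either a link (joining two vertices) or a dangling edge (with only one end incident with a vertex). Cutting an edge $uv$ into a pair of dangling edges means deleting $uv$ and attaching one new dangling edge to $u$ and one to $v$. A perfect matching of a multipole is a set of links and dangling edges such that every vertex is incident with exactly one of them. *)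

theory Defs
  imports Main
begin

definition petersen_verts :: "nat set" where
  "petersen_verts = {0..<10}"

definition petersen_edges :: "nat set set" where
  "petersen_edges =
     {{i, (i + 1) mod 5} | i. i < 5}
   \<union> {{i, i + 5} | i. i < 5}
   \<union> {{5 + i, 5 + ((i + 2) mod 5)} | i. i < 5}"

text \<open>Edges of a multipole: a link joins the two vertices of a 2-set; a dangling
  edge is incident with a single vertex.\<close>
datatype medge = Link "nat set" | Dangling nat

fun ends :: "medge \<Rightarrow> nat set" where
  "ends (Link s) = s"
| "ends (Dangling v) = {v}"

fun is_link :: "medge \<Rightarrow> bool" where
  "is_link (Link _) = True"
| "is_link (Dangling _) = False"

definition cut_edges :: "nat set \<Rightarrow> medge set" where
  "cut_edges e = Link ` (petersen_edges - {e}) \<union> Dangling ` e"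

definition dangling_of :: "nat set \<Rightarrow> medge set" where
  "dangling_of e = Dangling ` e"

definition links_of :: "medge set \<Rightarrow> medge set" where
  "links_of E = {x \<in> E. is_link x}"

definition perfect_matching :: "nat set \<Rightarrow> medge set \<Rightarrow> medge set \<Rightarrow> bool" where
  "perfect_matching V E M \<longleftrightarrow> M \<subseteq> E \<and> (\<forall>v\<in>V. \<exists>!x. x \<in> M \<and> v \<in> ends x)"

end

theory Submission
  imports Defs
begin

(* Let G be a graph with an even number of vertices and A the 2-pole obtained by cutting an edge e.
   In a perfect matching M of A the links pair up the vertices not hit by a dangling edge of M, so M
   contains both dangling edges or neither; thus the perfect matchings of A are exactly the perfect
   matchings N of G with e, if it lies in N, replaced by its two halves.
   The Petersen graph has exactly six perfect matchings, every edge lies in exactly two of them, and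
   three distinct ones cover 12 of the 15 edges. If U is the union of three of them, the links of A
   covered by the corresponding matchings of A are the edges of U other than e, so at least
   14 - 12 = 2 of the 14 links stay uncovered when e is not in U, and at least 15 - 12 = 3 when it
   is; triples of distinct matchings avoiding e, resp. one of them containing e, attain the bounds. *)

section \<open>Perfect matchings of a graph with a cut edge\<close>

definition graph_perfect_matching :: "nat set \<Rightarrow> nat set set \<Rightarrow> nat set set \<Rightarrow> bool" where
  "graph_perfect_matching V E N \<longleftrightarrow> N \<subseteq> E \<and> (\<forall>v\<in>V. \<exists>!x. x \<in> N \<and> v \<in> x)"

definition cut_graph :: "nat set set \<Rightarrow> nat set \<Rightarrow> medge set" where
  "cut_graph E e = Link ` (E - {e}) \<union> Dangling ` e"

definition lift_matching :: "nat set \<Rightarrow> nat set set \<Rightarrow> medge set" where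
  "lift_matching e N = Link ` (N - {e}) \<union> (if e \<in> N then Dangling ` e else {})"

lemma ex1_iff_card_eq_1: "(\<exists>!x. x \<in> A \<and> P x) \<longleftrightarrow> card {x \<in> A. P x} = 1"
  using is_singleton_iff_ex1[of "{x \<in> A. P x}"] by (simp add: is_singleton_iff_card_eq_Suc_0)

lemma graph_perfect_matchingI:
  assumes "N \<subseteq> E" "\<And>v. v \<in> V \<Longrightarrow> card {x \<in> N. v \<in> x} = 1"
  shows "graph_perfect_matching V E N"
  using assms unfolding graph_perfect_matching_def ex1_iff_card_eq_1 by blast

lemma graph_perfect_matching_exactly_one:
  assumes "graph_perfect_matching V E N" "v \<in> V" "{x \<in> E. v \<in> x} = {a, b, c}"
    and "a \<noteq> b" "a \<noteq> c" "b \<noteq> c"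
  shows "(a \<in> N \<or> b \<in> N \<or> c \<in> N) \<and> (a \<in> N \<longrightarrow> b \<notin> N \<and> c \<notin> N) \<and> (b \<in> N \<longrightarrow> c \<notin> N)"
proof -
  have "\<exists>!x. x \<in> N \<and> v \<in> x"
    using assms(1,2) unfolding graph_perfect_matching_def by blast
  then obtain x where x: "x \<in> N \<and> v \<in> x" and unique: "\<forall>y. y \<in> N \<and> v \<in> y \<longrightarrow> y = x"
    by (rule ex1E)
  have "x \<in> {a, b, c}"
    unfolding assms(3)[symmetric] using assms(1) x unfolding graph_perfect_matching_def by blast
  moreover have "v \<in> a" "v \<in> b" "v \<in> c"
    using equalityD2[OF assms(3)] by auto
  ultimately show ?thesis
    using x unique assms(4-6) by blast
qed

lemma lift_matching_Un: "lift_matching e (A \<union> B) = lift_matching e A \<union> lift_matching e B"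
  by (auto simp: lift_matching_def)

lemma lift_matching_subset_cut_graph: "N \<subseteq> E \<Longrightarrow> lift_matching e N \<subseteq> cut_graph E e"
  by (auto simp: lift_matching_def cut_graph_def)

lemma lift_matching_disjoint_dangling_iff:
  assumes "e \<noteq> {}"
  shows "lift_matching e N \<inter> Dangling ` e = {} \<longleftrightarrow> e \<notin> N"
proof (cases "e \<in> N")
  case True
  then have "Dangling ` e \<subseteq> lift_matching e N"
    unfolding lift_matching_def by auto
  with True assms show ?thesis by blast
next
  case False
  then show ?thesis
    unfolding lift_matching_def by auto
qed

lemma incident_lift_matching:
  "{y \<in> lift_matching e N. v \<in> ends y} = (\<lambda>x. if x = e then Dangling v else Link x) ` {x \<in> N. v \<in> x}"
    (is "?L = ?h ` ?R")
proof (intro equalityI subsetI)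
  fix y assume "y \<in> ?L"
  then show "y \<in> ?h ` ?R"
  proof (cases y)
    case (Link x)
    with \<open>y \<in> ?L\<close> have "x \<in> ?R" "x \<noteq> e" by (auto simp: lift_matching_def split: if_splits)
    then show ?thesis using Link by force
  next
    case (Dangling u)
    with \<open>y \<in> ?L\<close> have "e \<in> ?R" "u = v" by (auto simp: lift_matching_def split: if_splits)
    then show ?thesis using Dangling by force
  qed
next
  fix y assume "y \<in> ?h ` ?R"
  then show "y \<in> ?L" by (auto simp: lift_matching_def)
qed

lemma ex1_incident_lift_matching_iff:
  "(\<exists>!y. y \<in> lift_matching e N \<and> v \<in> ends y) \<longleftrightarrow> (\<exists>!x. x \<in> N \<and> v \<in> x)"
proof -
  have "inj (\<lambda>x. if x = e then Dangling v else Link x)"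
    by (rule injI) (auto split: if_splits)
  then have "card {y \<in> lift_matching e N. v \<in> ends y} = card {x \<in> N. v \<in> x}"
    unfolding incident_lift_matching by (rule card_image[OF inj_on_subset]) simp
  then show ?thesis
    unfolding ex1_iff_card_eq_1 by simp
qed

lemma perfect_matching_lift_iff:
  "N \<subseteq> E \<Longrightarrow> perfect_matching V (cut_graph E e) (lift_matching e N) \<longleftrightarrow> graph_perfect_matching V E N"
  using lift_matching_subset_cut_graph ex1_incident_lift_matching_iff
  unfolding perfect_matching_def graph_perfect_matching_def by auto

lemma perfect_matching_unique:
  assumes "perfect_matching V F M" "v \<in> V" "y \<in> M" "y' \<in> M" "v \<in> ends y" "v \<in> ends y'"
  shows "y = y'"
proof -
  have "\<exists>!y. y \<in> M \<and> v \<in> ends y"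
    using assms(1,2) unfolding perfect_matching_def by blast
  then obtain x where "\<forall>z. z \<in> M \<and> v \<in> ends z \<longrightarrow> z = x"
    by (rule ex1E)
  with assms(3-6) show ?thesis by blast
qed

lemma card_Union_doubletons:
  assumes "finite L" "pairwise disjnt L" "\<And>x. x \<in> L \<Longrightarrow> card x = 2"
  shows "card (\<Union>L) = 2 * card L"
proof -
  have "card (\<Union>L) = (\<Sum>x\<in>L. card x)"
    using assms by (intro card_Union_disjoint) (auto intro: card_ge_0_finite)
  also have "\<dots> = 2 * card L"
    using assms(3) by simp
  finally show ?thesis .
qed

lemma obtain_three_distinct:
  assumes "3 \<le> card A"
  obtains a b c where "a \<in> A" "b \<in> A" "c \<in> A" "a \<noteq> b" "a \<noteq> c" "b \<noteq> c"
proof -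
  obtain T where "T \<subseteq> A" "card T = 3"
    using obtain_subset_with_card_n[OF assms] by metis
  then show thesis
    using that unfolding card_3_iff by blast
qed

context
  fixes V :: "nat set" and E :: "nat set set" and e :: "nat set"
  assumes finite_V: "finite V" and even_V: "even (card V)"
    and edges: "\<And>x. x \<in> E \<Longrightarrow> x \<subseteq> V \<and> card x = 2"
    and e_edge: "e \<in> E"
begin

lemma card_covered_by_links:
  assumes M: "perfect_matching V (cut_graph E e) M"
  shows "card (V - {v. Dangling v \<in> M}) = 2 * card {x. Link x \<in> M}"
proof -
  define L where "L = {x. Link x \<in> M}"
  define D where "D = {v. Dangling v \<in> M}"
  have "M \<subseteq> cut_graph E e"
    using M by (simp add: perfect_matching_def)
  then have L_E: "L \<subseteq> E"
    by (auto simp: L_def cut_graph_def)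
  have L_V: "x \<subseteq> V" if "x \<in> L" for x
    using edges L_E that by blast
  have "\<Union>L = V - D"
  proof (intro equalityI subsetI)
    fix v assume "v \<in> \<Union>L"
    then obtain x where x: "x \<in> L" "v \<in> x" by blast
    then have "v \<in> V" using L_V by blast
    moreover have "Dangling v \<notin> M"
      using perfect_matching_unique[OF M \<open>v \<in> V\<close>, of "Link x" "Dangling v"] x by (auto simp: L_def)
    ultimately show "v \<in> V - D" by (simp add: D_def)
  next
    fix v assume v: "v \<in> V - D"
    then have "\<exists>y. y \<in> M \<and> v \<in> ends y"
      using M unfolding perfect_matching_def by (blast intro: ex1_implies_ex)
    then obtain y where "y \<in> M" "v \<in> ends y" by blast
    with v show "v \<in> \<Union>L" by (cases y) (auto simp: L_def D_def)
  qed
  moreover have "pairwise disjnt L"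
  proof (rule pairwiseI)
    fix x x' assume "x \<in> L" "x' \<in> L" "x \<noteq> x'"
    then show "disjnt x x'"
      using perfect_matching_unique[OF M, of _ "Link x" "Link x'"] L_V
      unfolding disjnt_def L_def by fastforce
  qed
  moreover have "finite L"
    using L_V finite_V by (meson PowI finite_Pow_iff finite_subset subsetI)
  moreover have "card x = 2" if "x \<in> L" for x
    using edges L_E that by blast
  ultimately show ?thesis
    unfolding L_def[symmetric] D_def[symmetric] using card_Union_doubletons by metis
qed

lemma perfect_matching_cut_graph_dangling:
  assumes M: "perfect_matching V (cut_graph E e) M"
  shows "Dangling ` e \<subseteq> M \<or> M \<inter> Dangling ` e = {}"
proof -
  define D where "D = {v. Dangling v \<in> M}"
  have D_e: "D \<subseteq> e"
    using M by (auto simp: D_def perfect_matching_def cut_graph_def)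
  have e_V: "e \<subseteq> V" and card_e: "card e = 2"
    using edges e_edge by auto
  have "card (V - D) = card V - card D" "card D \<le> card V"
    using D_e e_V finite_V by (auto intro: card_Diff_subset card_mono finite_subset)
  with card_covered_by_links[OF M, folded D_def] even_V have even_D: "even (card D)"
    by presburger
  have "finite e"
    using card_e by (intro card_ge_0_finite) simp
  then have "finite D" "card D \<le> 2"
    using card_mono[OF _ D_e] finite_subset[OF D_e] card_e by auto
  with even_D have "card D = 0 \<or> card D = card e"
    using card_e by presburger
  then have "D = {} \<or> D = e"
    using card_subset_eq[OF \<open>finite e\<close> D_e] \<open>finite D\<close> by auto
  then show ?thesis by (auto simp: D_def)
qed

lemma perfect_matching_cut_graph_iff:
  "perfect_matching V (cut_graph E e) M \<longleftrightarrow> (\<exists>N. graph_perfect_matching V E N \<and> M = lift_matching e N)"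
proof
  assume M: "perfect_matching V (cut_graph E e) M"
  define N where "N = {x. Link x \<in> M} \<union> (if Dangling ` e \<subseteq> M then {e} else {})"
  have sub: "M \<subseteq> cut_graph E e"
    using M by (simp add: perfect_matching_def)
  then have "N \<subseteq> E" and "Link e \<notin> M"
    using e_edge by (auto simp: N_def cut_graph_def)
  moreover have "M = lift_matching e N"
  proof (intro equalityI subsetI)
    fix y assume "y \<in> M"
    with sub perfect_matching_cut_graph_dangling[OF M] show "y \<in> lift_matching e N"
      by (cases y) (auto simp: N_def lift_matching_def cut_graph_def)
  next
    fix y assume "y \<in> lift_matching e N"
    with \<open>Link e \<notin> M\<close> show "y \<in> M"
      by (auto simp: N_def lift_matching_def split: if_splits)
  qed
  ultimately show "\<exists>N. graph_perfect_matching V E N \<and> M = lift_matching e N"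
    using M perfect_matching_lift_iff by blast
next
  assume "\<exists>N. graph_perfect_matching V E N \<and> M = lift_matching e N"
  then show "perfect_matching V (cut_graph E e) M"
    using perfect_matching_lift_iff by (auto simp: graph_perfect_matching_def)
qed

end

lemma links_of_cut_graph_diff_lift:
  "links_of (cut_graph E e) - lift_matching e U = Link ` (E - insert e U)"
  by (auto simp: links_of_def cut_graph_def lift_matching_def)

lemma card_uncovered_links:
  assumes "finite E" "e \<in> E" "U \<subseteq> E"
  shows "card (links_of (cut_graph E e) - lift_matching e U) = card E - card (insert e U)"
proof -
  have "card (Link ` (E - insert e U)) = card (E - insert e U)"
    by (rule card_image) (simp add: inj_on_def)
  also have "\<dots> = card E - card (insert e U)"
    using assms by (intro card_Diff_subset) (auto intro: finite_subset)
  finally show ?thesis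
    by (simp add: links_of_cut_graph_diff_lift)
qed

section \<open>The perfect matchings of the Petersen graph\<close>

lemma petersen_edges_eq:
  "petersen_edges = {{0,1}, {1,2}, {2,3}, {3,4}, {0,4}, {0,5}, {1,6}, {2,7}, {3,8}, {4,9},
    {5,7}, {6,8}, {7,9}, {5,8}, {6,9}}"
proof -
  have five: "{f i |i. i < (5::nat)} = {f 0, f 1, f 2, f 3, f 4}" for f :: "nat \<Rightarrow> nat set"
    by (auto simp: less_Suc_eq numeral_eq_Suc)
  show ?thesis
    unfolding petersen_edges_def five by (simp add: numeral_2_eq_2 insert_commute)
qed

lemma petersen_edgeD: "x \<in> petersen_edges \<Longrightarrow> x \<subseteq> petersen_verts \<and> card x = 2"
  unfolding petersen_edges_eq petersen_verts_def by auto

lemma card_petersen_edges: "card petersen_edges = 15"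
  by (simp add: petersen_edges_eq doubleton_eq_iff)

lemma petersen_incidences:
  "{x \<in> petersen_edges. 0 \<in> x} = {{0,1}, {0,4}, {0,5}}"
  "{x \<in> petersen_edges. 1 \<in> x} = {{0,1}, {1,2}, {1,6}}"
  "{x \<in> petersen_edges. 2 \<in> x} = {{1,2}, {2,3}, {2,7}}"
  "{x \<in> petersen_edges. 3 \<in> x} = {{2,3}, {3,4}, {3,8}}"
  "{x \<in> petersen_edges. 4 \<in> x} = {{3,4}, {0,4}, {4,9}}"
  "{x \<in> petersen_edges. 5 \<in> x} = {{0,5}, {5,7}, {5,8}}"
  "{x \<in> petersen_edges. 6 \<in> x} = {{1,6}, {6,8}, {6,9}}"
  "{x \<in> petersen_edges. 7 \<in> x} = {{2,7}, {5,7}, {7,9}}"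
  "{x \<in> petersen_edges. 8 \<in> x} = {{3,8}, {6,8}, {5,8}}"
  "{x \<in> petersen_edges. 9 \<in> x} = {{4,9}, {7,9}, {6,9}}"
  unfolding Collect_conj_eq Collect_mem_eq petersen_edges_eq by simp_all

(* Matching i < 5 is the perfect matching whose only spoke is {i, i + 5}; matching 5 consists of
   the five spokes. Indices beyond 5 give unspecified values. *)
definition petersen_matching :: "nat \<Rightarrow> nat set set" where
  "petersen_matching i =
    [{{0,5}, {1,2}, {3,4}, {6,8}, {7,9}},
     {{1,6}, {2,3}, {0,4}, {7,9}, {5,8}},
     {{2,7}, {3,4}, {0,1}, {5,8}, {6,9}},
     {{3,8}, {0,4}, {1,2}, {6,9}, {5,7}},
     {{4,9}, {0,1}, {2,3}, {5,7}, {6,8}},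
     {{0,5}, {1,6}, {2,7}, {3,8}, {4,9}}] ! i"

lemma nat_less_6_iff: "(i::nat) < 6 \<longleftrightarrow> i = 0 \<or> i = 1 \<or> i = 2 \<or> i = 3 \<or> i = 4 \<or> i = 5"
  by auto

lemma ex_nat_less_6: "(\<exists>i<6. P i) \<longleftrightarrow> P 0 \<or> P 1 \<or> P 2 \<or> P 3 \<or> P 4 \<or> P (5::nat)"
  unfolding nat_less_6_iff by blast

lemma petersen_verts_eq: "petersen_verts = {0, 1, 2, 3, 4, 5, 6, 7, 8, 9}"
  by (auto simp: petersen_verts_def)

lemma petersen_matching_perfect:
  assumes "i < 6"
  shows "graph_perfect_matching petersen_verts petersen_edges (petersen_matching i)"
proof (rule graph_perfect_matchingI)
  show "petersen_matching i \<subseteq> petersen_edges"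
    using assms unfolding nat_less_6_iff
    by (elim disjE) (simp_all add: petersen_matching_def petersen_edges_eq)
  show "card {x \<in> petersen_matching i. v \<in> x} = 1" if "v \<in> petersen_verts" for v
    using assms that unfolding nat_less_6_iff petersen_verts_eq insert_iff empty_iff simp_thms
      Collect_conj_eq Collect_mem_eq
    by (elim disjE) (simp_all add: petersen_matching_def)
qed

(* Each vertex is covered by exactly one of its three edges; these ten constraints on the 15 edges
   have exactly the six solutions listed above. *)
lemma petersen_perfect_matching_cases:
  assumes N: "graph_perfect_matching petersen_verts petersen_edges N"
  shows "\<exists>i<6. N = petersen_matching i"
proof -
  note exactly_one = graph_perfect_matching_exactly_one[OF N]
  note at_vertex = exactly_one[OF _ petersen_incidences(1)] exactly_one[OF _ petersen_incidences(2)]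
    exactly_one[OF _ petersen_incidences(3)] exactly_one[OF _ petersen_incidences(4)]
    exactly_one[OF _ petersen_incidences(5)] exactly_one[OF _ petersen_incidences(6)]
    exactly_one[OF _ petersen_incidences(7)] exactly_one[OF _ petersen_incidences(8)]
    exactly_one[OF _ petersen_incidences(9)] exactly_one[OF _ petersen_incidences(10)]
  have "\<exists>i<6. \<forall>x\<in>petersen_edges. x \<in> N \<longleftrightarrow> x \<in> petersen_matching i"
    unfolding ex_nat_less_6 petersen_edges_eq ball_simps
    by (simp add: petersen_matching_def doubleton_eq_iff)
      (use at_vertex[simplified petersen_verts_def doubleton_eq_iff, simplified] in sat)
  then obtain i where i: "i < 6" and same_edges: "\<forall>x\<in>petersen_edges. x \<in> N \<longleftrightarrow> x \<in> petersen_matching i"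
    by blast
  have "N \<subseteq> petersen_edges" "petersen_matching i \<subseteq> petersen_edges"
    using N petersen_matching_perfect[OF i] by (simp_all add: graph_perfect_matching_def)
  with same_edges have "N = petersen_matching i"
    by (intro set_eqI) blast
  with i show ?thesis by blast
qed

lemma card_petersen_matching: "i < 6 \<Longrightarrow> card (petersen_matching i) = 5"
  unfolding nat_less_6_iff
  by (elim disjE) (simp_all add: petersen_matching_def doubleton_eq_iff)

(* Two distinct perfect matchings of the Petersen graph share exactly one edge and no edge lies in
   three of them, so three distinct ones cover 15 - 3 edges. *)
lemma card_Un3_petersen_matching:
  assumes "i < 6" "j < 6" "k < 6" "i \<noteq> j" "i \<noteq> k" "j \<noteq> k"
  shows "card (petersen_matching i \<union> petersen_matching j \<union> petersen_matching k) = 12"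
  using assms unfolding nat_less_6_iff
  by (elim disjE) (simp_all add: petersen_matching_def doubleton_eq_iff card_insert_if)

lemma card_Un3_petersen_matching_le:
  assumes "i < 6" "j < 6" "k < 6"
  shows "card (petersen_matching i \<union> petersen_matching j \<union> petersen_matching k) \<le> 12"
proof (cases "i \<noteq> j \<and> i \<noteq> k \<and> j \<noteq> k")
  case True
  with assms show ?thesis by (simp add: card_Un3_petersen_matching)
next
  case False
  have pair: "card (petersen_matching a \<union> petersen_matching b) \<le> 12" if "a < 6" "b < 6" for a b
    using card_Un_le[of "petersen_matching a" "petersen_matching b"] that
    by (simp add: card_petersen_matching)
  from False consider "i = j" | "i = k" | "j = k" by blast
  then show ?thesis
  proof cases
    case 1
    then show ?thesis using pair[OF assms(2,3)] by simp
  next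
    case 2
    then have "petersen_matching i \<union> petersen_matching j \<union> petersen_matching k
        = petersen_matching i \<union> petersen_matching j" by blast
    then show ?thesis using pair[OF assms(1,2)] by simp
  next
    case 3
    then show ?thesis using pair[OF assms(1,2)] by (simp add: Un_assoc)
  qed
qed

lemma petersen_edge_in_two_matchings:
  assumes "x \<in> petersen_edges"
  shows "card {i \<in> {..<6}. x \<in> petersen_matching i} = 2"
proof -
  have "{..<6::nat} = {0, 1, 2, 3, 4, 5}" by auto
  with assms show ?thesis
    unfolding petersen_edges_eq Collect_conj_eq Collect_mem_eq
    by (elim insertE emptyE) (simp_all add: petersen_matching_def doubleton_eq_iff)
qed

lemma petersen_matchings_avoiding_edge:
  assumes "x \<in> petersen_edges"
  obtains i j k where "i < 6" "j < 6" "k < 6" "i \<noteq> j" "i \<noteq> k" "j \<noteq> k"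
    "x \<notin> petersen_matching i \<union> petersen_matching j \<union> petersen_matching k"
proof -
  let ?meeting = "{i \<in> {..<6}. x \<in> petersen_matching i}"
  have "{i \<in> {..<6}. x \<notin> petersen_matching i} = {..<6} - ?meeting"
    by blast
  moreover have "card ({..<6} - ?meeting) = card {..<6::nat} - card ?meeting"
    by (rule card_Diff_subset) (auto intro: finite_subset[of _ "{..<6}"])
  ultimately have "3 \<le> card {i \<in> {..<6}. x \<notin> petersen_matching i}"
    using petersen_edge_in_two_matchings[OF assms] by simp
  then obtain i j k where "i \<in> {..<6}" "j \<in> {..<6}" "k \<in> {..<6}" "i \<noteq> j" "i \<noteq> k" "j \<noteq> k"
    "x \<notin> petersen_matching i" "x \<notin> petersen_matching j" "x \<notin> petersen_matching k"
    by (rule obtain_three_distinct) blast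
  then show thesis
    using that by simp
qed

lemma petersen_matchings_meeting_edge:
  assumes "x \<in> petersen_edges"
  obtains i j k where "i < 6" "j < 6" "k < 6" "i \<noteq> j" "i \<noteq> k" "j \<noteq> k"
    "x \<in> petersen_matching i"
proof -
  have "{i \<in> {..<6}. x \<in> petersen_matching i} \<noteq> {}"
    using petersen_edge_in_two_matchings[OF assms] by (metis card.empty zero_neq_numeral)
  then obtain i where "i < 6" "x \<in> petersen_matching i" by blast
  moreover have "(i + 1) mod 6 \<noteq> i" "(i + 2) mod 6 \<noteq> i" "(i + 1) mod 6 \<noteq> (i + 2) mod 6"
    using \<open>i < 6\<close> by presburger+
  ultimately show thesis
    using that[of i "(i + 1) mod 6" "(i + 2) mod 6"] by simp
qed

section \<open>The Petersen graph with a cut edge\<close>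

lemma petersen_perfect_matching_iff:
  "graph_perfect_matching petersen_verts petersen_edges N \<longleftrightarrow> (\<exists>i<6. N = petersen_matching i)"
  using petersen_perfect_matching_cases petersen_matching_perfect by blast

lemma cut_edges_eq_cut_graph: "cut_edges e = cut_graph petersen_edges e"
  unfolding cut_edges_def cut_graph_def ..

lemma finite_even_petersen_verts: "finite petersen_verts" "even (card petersen_verts)"
  by (simp_all add: petersen_verts_def)

lemma petersen_cut_perfect_matching_dangling:
  "e \<in> petersen_edges \<Longrightarrow> perfect_matching petersen_verts (cut_edges e) M
    \<Longrightarrow> dangling_of e \<subseteq> M \<or> M \<inter> dangling_of e = {}"
  unfolding cut_edges_eq_cut_graph dangling_of_def
  by (rule perfect_matching_cut_graph_dangling[OF finite_even_petersen_verts petersen_edgeD])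

lemma petersen_cut_perfect_matching_iff:
  "e \<in> petersen_edges \<Longrightarrow> perfect_matching petersen_verts (cut_edges e) M
    \<longleftrightarrow> (\<exists>i<6. M = lift_matching e (petersen_matching i))"
  unfolding cut_edges_eq_cut_graph
  by (subst perfect_matching_cut_graph_iff[OF finite_even_petersen_verts petersen_edgeD])
    (auto simp: petersen_perfect_matching_iff)

lemma petersen_cut_lift_disjoint_dangling_iff:
  "e \<in> petersen_edges \<Longrightarrow> lift_matching e N \<inter> dangling_of e = {} \<longleftrightarrow> e \<notin> N"
  unfolding dangling_of_def
  by (rule lift_matching_disjoint_dangling_iff) (use petersen_edgeD in force)

lemma card_uncovered_links_petersen_cut:
  assumes "e \<in> petersen_edges" "i < 6" "j < 6" "k < 6"
  defines "U \<equiv> petersen_matching i \<union> petersen_matching j \<union> petersen_matching k"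
    and "uncovered \<equiv> card (links_of (cut_edges e) - (lift_matching e (petersen_matching i)
      \<union> lift_matching e (petersen_matching j) \<union> lift_matching e (petersen_matching k)))"
  shows "e \<notin> U \<Longrightarrow> 2 \<le> uncovered" and "e \<in> U \<Longrightarrow> 3 \<le> uncovered"
    and "i \<noteq> j \<Longrightarrow> i \<noteq> k \<Longrightarrow> j \<noteq> k \<Longrightarrow> uncovered = (if e \<in> U then 3 else 2)"
proof -
  have "U \<subseteq> petersen_edges"
    using assms petersen_matching_perfect unfolding graph_perfect_matching_def by auto
  moreover have "finite petersen_edges"
    by (simp add: petersen_edges_eq)
  ultimately have "finite U"
    using finite_subset by blast
  have "card (links_of (cut_edges e) - lift_matching e U) = 15 - card (insert e U)"
    unfolding cut_edges_eq_cut_graph card_petersen_edges[symmetric]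
    by (rule card_uncovered_links) fact+
  with \<open>finite U\<close> have "uncovered = (if e \<in> U then 15 - card U else 14 - card U)"
    by (simp add: U_def uncovered_def lift_matching_Un card_insert_if)
  then show "e \<notin> U \<Longrightarrow> 2 \<le> uncovered" and "e \<in> U \<Longrightarrow> 3 \<le> uncovered"
    and "i \<noteq> j \<Longrightarrow> i \<noteq> k \<Longrightarrow> j \<noteq> k \<Longrightarrow> uncovered = (if e \<in> U then 3 else 2)"
    using card_Un3_petersen_matching_le[OF assms(2-4)] card_Un3_petersen_matching[OF assms(2-4)]
    by (simp_all add: U_def)
qed

theorem lemma1:
  assumes "e \<in> petersen_edges"
  defines "pm \<equiv> perfect_matching petersen_verts (cut_edges e)"
  shows
    "(\<forall>M. pm M \<longrightarrow> dangling_of e \<subseteq> M \<or> M \<inter> dangling_of e = {})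
   \<and> (\<forall>M1 M2 M3. pm M1 \<and> pm M2 \<and> pm M3
          \<and> M1 \<inter> dangling_of e = {} \<and> M2 \<inter> dangling_of e = {} \<and> M3 \<inter> dangling_of e = {}
          \<longrightarrow> card (links_of (cut_edges e) - (M1 \<union> M2 \<union> M3)) \<ge> 2)
   \<and> (\<exists>M1 M2 M3. pm M1 \<and> pm M2 \<and> pm M3
          \<and> M1 \<inter> dangling_of e = {} \<and> M2 \<inter> dangling_of e = {} \<and> M3 \<inter> dangling_of e = {}
          \<and> card (links_of (cut_edges e) - (M1 \<union> M2 \<union> M3)) = 2)
   \<and> (\<forall>M1 M2 M3. pm M1 \<and> pm M2 \<and> pm M3
          \<and> (M1 \<inter> dangling_of e \<noteq> {} \<or> M2 \<inter> dangling_of e \<noteq> {} \<or> M3 \<inter> dangling_of e \<noteq> {})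
          \<longrightarrow> card (links_of (cut_edges e) - (M1 \<union> M2 \<union> M3)) \<ge> 3)
   \<and> (\<exists>M1 M2 M3. pm M1 \<and> pm M2 \<and> pm M3
          \<and> (M1 \<inter> dangling_of e \<noteq> {} \<or> M2 \<inter> dangling_of e \<noteq> {} \<or> M3 \<inter> dangling_of e \<noteq> {})
          \<and> card (links_of (cut_edges e) - (M1 \<union> M2 \<union> M3)) = 3)"
proof -
  let ?lift = "\<lambda>i. lift_matching e (petersen_matching i)"
  note pm_iff = petersen_cut_perfect_matching_iff[OF assms(1), folded pm_def]
  note dangling = petersen_cut_lift_disjoint_dangling_iff[OF assms(1)]
  note uncovered = card_uncovered_links_petersen_cut[OF assms(1)]
  obtain i j k where avoiding: "i < 6" "j < 6" "k < 6" "i \<noteq> j" "i \<noteq> k" "j \<noteq> k"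
    "e \<notin> petersen_matching i \<union> petersen_matching j \<union> petersen_matching k"
    using petersen_matchings_avoiding_edge[OF assms(1)] .
  obtain i' j' k' where meeting: "i' < 6" "j' < 6" "k' < 6" "i' \<noteq> j'" "i' \<noteq> k'" "j' \<noteq> k'"
    "e \<in> petersen_matching i'"
    using petersen_matchings_meeting_edge[OF assms(1)] .
  show ?thesis
    apply (intro conjI)
    subgoal
      unfolding pm_def using petersen_cut_perfect_matching_dangling[OF assms(1)] by blast
    subgoal
      unfolding pm_iff by (clarsimp simp: dangling uncovered)
    subgoal
      using avoiding by (intro exI[of _ "?lift i"] exI[of _ "?lift j"] exI[of _ "?lift k"])
        (auto simp: pm_iff dangling uncovered)
    subgoal
      unfolding pm_iff by (clarsimp simp: dangling) (meson Un_iff uncovered(2))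
    subgoal
      using meeting by (intro exI[of _ "?lift i'"] exI[of _ "?lift j'"] exI[of _ "?lift k'"])
        (auto simp: pm_iff dangling uncovered)
    done
qed

end
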